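(* Let $P \in \mathbb{N}_0^{\sigma}$ and $w \in \Sigma^{*|_P}$. Every maximal clique of $G(P)$ containing $w$ is of the form $\{w\} \cup \{ w \circ (i,j) \mid i \in \mathrm{Pos}(w,x)\}$ for some symbol $x \in \Sigma$ and some position $j \in [n]$ with $w[j] \neq x$.
   Context: Alphabet $\Sigma = [\sigma]$. For a word $w$ of length $n$, $w[i]$ is its $i$-th symbol. The Parikh vector $P(w) \in \mathbb{N}_0^{\sigma}$ has $P(w)[a] = |\{i \in [n] : w[i]=a\}|$. For $P \in \mathbb{N}_0^\sigma$, $n := \sum_a P[a]$ and $\Sigma^{*|_P}$ is the set of words $w$ with $P(w)=P$. For $i \neq j$ with $w[i]\neq w[j]$, the 2-swap $w\circ(i,j)$ exchanges the symbols at positions $i$ and $j$. The configuration graph $G(P)$ has vertex set $\Sigma^{*|_P}$ and an edge $\{w,u\}$ whenever $u = w\circ(i,j)$ for some 2-swap. $\mathrm{Pos}(w,x) = \{i \in [n] : w[i]=x\}$. A maximal clique is a clique not contained in a strictly larger clique. *)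

theory Defs
  imports Main
begin

(* Alphabet [sigma] = {1..sigma}. Words are lists; positions are 0-based list
   indices 0..<length w (corresponding to [n] = {1..n} shifted by one). *)

definition alphabet :: "nat \<Rightarrow> nat set" where
  "alphabet \<sigma> = {1..\<sigma>}"

definition Pos :: "nat list \<Rightarrow> nat \<Rightarrow> nat set" where
  "Pos w x = {i. i < length w \<and> w ! i = x}"

definition parikh :: "nat list \<Rightarrow> nat \<Rightarrow> nat" where
  "parikh w a = card (Pos w a)"

(* Parikh vectors P in N_0^sigma are functions nat => nat, only the values on
   {1..sigma} matter. n := sum of P over the alphabet. *)
definition word_len :: "nat \<Rightarrow> (nat \<Rightarrow> nat) \<Rightarrow> nat" where
  "word_len \<sigma> P = (\<Sum>a\<in>alphabet \<sigma>. P a)"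

definition words :: "nat \<Rightarrow> (nat \<Rightarrow> nat) \<Rightarrow> nat list set" where
  "words \<sigma> P = {w. set w \<subseteq> alphabet \<sigma> \<and> (\<forall>a\<in>alphabet \<sigma>. parikh w a = P a)}"

definition swap :: "nat list \<Rightarrow> nat \<Rightarrow> nat \<Rightarrow> nat list" where
  "swap w i j = w[i := w ! j, j := w ! i]"

definition G_edge :: "nat \<Rightarrow> (nat \<Rightarrow> nat) \<Rightarrow> nat list \<Rightarrow> nat list \<Rightarrow> bool" where
  "G_edge \<sigma> P w u \<longleftrightarrow> w \<in> words \<sigma> P \<and> u \<in> words \<sigma> P \<and>
     (\<exists>i j. i < length w \<and> j < length w \<and> i \<noteq> j \<and> w ! i \<noteq> w ! j \<and> u = swap w i j)"

definition is_clique :: "nat \<Rightarrow> (nat \<Rightarrow> nat) \<Rightarrow> nat list set \<Rightarrow> bool" where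
  "is_clique \<sigma> P C \<longleftrightarrow> C \<subseteq> words \<sigma> P \<and>
     (\<forall>u\<in>C. \<forall>v\<in>C. u \<noteq> v \<longrightarrow> G_edge \<sigma> P u v)"

definition is_maximal_clique :: "nat \<Rightarrow> (nat \<Rightarrow> nat) \<Rightarrow> nat list set \<Rightarrow> bool" where
  "is_maximal_clique \<sigma> P C \<longleftrightarrow> is_clique \<sigma> P C \<and>
     \<not> (\<exists>C'. is_clique \<sigma> P C' \<and> C \<subset> C')"

end

theory Submission
  imports Defs "HOL-Library.Multiset"
begin

text \<open>Two distinct neighbours \<open>w \<circ> (i,j)\<close> and \<open>w \<circ> (k,l)\<close> of \<open>w\<close> are adjacent only if
  the two transpositions share a position and move equal symbols into it: otherwise the
  two words differ in at least three positions, whereas a 2-swap changes exactly two.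
  Hence two neighbours in a clique have the form \<open>w \<circ> (a,m)\<close>, \<open>w \<circ> (c,m)\<close> with
  \<open>w[a] = w[c] = x \<noteq> w[m]\<close>, and every further member of the clique, being adjacent to
  both, is again of the form \<open>w \<circ> (e,m)\<close> with \<open>w[e] = x\<close>. So every clique through \<open>w\<close>
  lies in such a star, and stars are cliques; maximality gives equality.\<close>

definition swap_star :: "nat list \<Rightarrow> nat \<Rightarrow> nat \<Rightarrow> nat list set" where
  "swap_star w x j = {w} \<union> {swap w i j | i. i \<in> Pos w x}"

lemma length_swap [simp]: "length (swap w i j) = length w"
  by (simp add: swap_def)

lemma nth_swap:
  "i < length w \<Longrightarrow> j < length w \<Longrightarrow> r < length w \<Longrightarrow>
    swap w i j ! r = (if r = j then w ! i else if r = i then w ! j else w ! r)"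
  unfolding swap_def by (auto simp: nth_list_update)

lemma swap_commute: "i < length w \<Longrightarrow> j < length w \<Longrightarrow> swap w i j = swap w j i"
  by (rule nth_equalityI) (auto simp: nth_swap)

lemma swap_swap_cancel: "i < length w \<Longrightarrow> j < length w \<Longrightarrow> swap (swap w i j) i j = w"
  by (rule nth_equalityI) (auto simp: nth_swap)

lemma swap_swap_equal_symbols:
  "i < length w \<Longrightarrow> i' < length w \<Longrightarrow> j < length w \<Longrightarrow> i \<noteq> j \<Longrightarrow> i' \<noteq> j \<Longrightarrow> w ! i = w ! i'
    \<Longrightarrow> swap (swap w i j) i i' = swap w i' j"
  by (rule nth_equalityI) (auto simp: nth_swap)

lemma swap_differs_only_at:
  "p < length u \<Longrightarrow> q < length u \<Longrightarrow> r < length u \<Longrightarrow> swap u p q ! r \<noteq> u ! r \<Longrightarrow> r = p \<or> r = q"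
  by (auto simp: nth_swap split: if_splits)

lemma parikh_eq_count: "parikh w a = count (mset w) a"
  unfolding parikh_def Pos_def
  by (simp add: count_mset count_list_eq_length_filter length_filter_conv_card eq_commute)

lemma swap_in_words:
  assumes "w \<in> words \<sigma> P" "i < length w" "j < length w"
  shows "swap w i j \<in> words \<sigma> P"
proof -
  have "mset (swap w i j) = mset w"
    unfolding swap_def using mset_swap[OF assms(3,2)] .
  then have "set (swap w i j) = set w" by (metis set_mset_mset)
  with \<open>mset (swap w i j) = mset w\<close> show ?thesis
    using assms(1) unfolding words_def parikh_eq_count by simp
qed

lemma length_word:
  assumes "w \<in> words \<sigma> P"
  shows "length w = word_len \<sigma> P"
proof -
  have set_w: "set w \<subseteq> alphabet \<sigma>" and parikh_w: "\<forall>a\<in>alphabet \<sigma>. parikh w a = P a"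
    using assms by (auto simp: words_def)
  have "length w = size (mset w)" by simp
  also have "\<dots> = (\<Sum>a\<in>alphabet \<sigma>. count (mset w) a)"
    using set_w by (subst size_multiset_overloaded_eq)
      (auto intro!: sum.mono_neutral_left simp: alphabet_def)
  also have "\<dots> = word_len \<sigma> P"
    unfolding word_len_def using parikh_w by (simp add: parikh_eq_count)
  finally show ?thesis .
qed

lemma G_edge_swap:
  "w \<in> words \<sigma> P \<Longrightarrow> i < length w \<Longrightarrow> j < length w \<Longrightarrow> w ! i \<noteq> w ! j \<Longrightarrow> G_edge \<sigma> P w (swap w i j)"
  unfolding G_edge_def by (metis swap_in_words)

lemma G_edge_sym:
  assumes "G_edge \<sigma> P u v"
  shows "G_edge \<sigma> P v u"
proof -
  obtain i j where ij: "i < length u" "j < length u" "u ! i \<noteq> u ! j" "v = swap u i j"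
    and words: "u \<in> words \<sigma> P" "v \<in> words \<sigma> P"
    using assms unfolding G_edge_def by blast
  then have "u = swap v i j" "v ! i \<noteq> v ! j"
    by (auto simp: swap_swap_cancel nth_swap)
  then show ?thesis
    using ij words unfolding G_edge_def by auto
qed

lemma clique_edge:
  assumes "is_clique \<sigma> P C" "u \<in> C" "v \<in> C" "u \<noteq> v"
  obtains i j where "i < length u" "j < length u" "u ! i \<noteq> u ! j" "v = swap u i j"
  using assms unfolding is_clique_def G_edge_def by blast

lemma swap_star_is_clique:
  assumes w: "w \<in> words \<sigma> P" and j: "j < length w" and x: "w ! j \<noteq> x"
  shows "is_clique \<sigma> P (swap_star w x j)"
proof -
  have centre: "G_edge \<sigma> P w (swap w i j)" if "i \<in> Pos w x" for i
    using that w j x by (intro G_edge_swap) (auto simp: Pos_def)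
  have leaves: "G_edge \<sigma> P (swap w i j) (swap w i' j)"
    if "i \<in> Pos w x" "i' \<in> Pos w x" "i \<noteq> i'" for i i'
  proof -
    from that have i: "i < length w" "w ! i = x" and i': "i' < length w" "w ! i' = x"
      by (auto simp: Pos_def)
    have "swap (swap w i j) i i' = swap w i' j"
      using i i' j x \<open>i \<noteq> i'\<close> by (auto intro: swap_swap_equal_symbols)
    moreover have "swap w i j ! i \<noteq> swap w i j ! i'"
      using i i' j x \<open>i \<noteq> i'\<close> by (auto simp: nth_swap)
    ultimately show ?thesis
      using G_edge_swap[OF swap_in_words[OF w i(1) j]] i i' by (metis length_swap)
  qed
  show ?thesis
    unfolding is_clique_def swap_star_def
  proof (intro conjI ballI impI)
    show "{w} \<union> {swap w i j |i. i \<in> Pos w x} \<subseteq> words \<sigma> P"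
      using w j swap_in_words by (auto simp: Pos_def)
  next
    fix u v
    assume "u \<in> {w} \<union> {swap w i j |i. i \<in> Pos w x}" "v \<in> {w} \<union> {swap w i j |i. i \<in> Pos w x}"
      and "u \<noteq> v"
    then show "G_edge \<sigma> P u v"
      by (auto intro: centre G_edge_sym[OF centre] leaves)
  qed
qed

lemma adjacent_swaps_at_common_position:
  assumes "s < length w" "t < length w" "t' < length w" "t \<noteq> t'"
    and "w ! s \<noteq> w ! t" "w ! s \<noteq> w ! t'"
    and "p < length w" "q < length w" "swap (swap w s t) p q = swap w s t'"
  shows "w ! t = w ! t'"
proof (rule ccontr)
  assume "w ! t \<noteq> w ! t'"
  have "s \<noteq> t" "s \<noteq> t'" using assms(5,6) by auto
  then have "swap w s t' ! r \<noteq> swap w s t ! r" if "r \<in> {s, t, t'}" for r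
    using that assms(1-6) \<open>w ! t \<noteq> w ! t'\<close> by (auto simp: nth_swap)
  then have "r = p \<or> r = q" if "r \<in> {s, t, t'}" for r
    using that assms(1-3,7-9) swap_differs_only_at[of p "swap w s t" q r] by auto
  then show False using \<open>s \<noteq> t\<close> \<open>s \<noteq> t'\<close> \<open>t \<noteq> t'\<close> by blast
qed

lemma adjacent_swaps_overlap:
  assumes "i < length w" "j < length w" "k < length w" "l < length w"
    and "w ! i \<noteq> w ! j" "w ! k \<noteq> w ! l"
    and "p < length w" "q < length w" "swap (swap w i j) p q = swap w k l"
  shows "{i, j} \<inter> {k, l} \<noteq> {}"
proof
  assume disjoint: "{i, j} \<inter> {k, l} = {}"
  have "i \<noteq> j" "k \<noteq> l" using assms(5,6) by auto
  with disjoint have "swap w k l ! r \<noteq> swap w i j ! r" if "r \<in> {i, j, k, l}" for r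
    using that assms(1-6) by (auto simp: nth_swap)
  then have "r = p \<or> r = q" if "r \<in> {i, j, k, l}" for r
    using that assms(1-4,7-9) swap_differs_only_at[of p "swap w i j" q r] by auto
  then show False using disjoint \<open>i \<noteq> j\<close> \<open>k \<noteq> l\<close> by blast
qed

lemma adjacent_swaps_cases:
  assumes "i < length w" "j < length w" "k < length w" "l < length w"
    and "w ! i \<noteq> w ! j" "w ! k \<noteq> w ! l"
    and "p < length w" "q < length w" "swap (swap w i j) p q = swap w k l"
    and "swap w i j \<noteq> swap w k l"
  shows "(i = k \<and> w ! j = w ! l) \<or> (i = l \<and> w ! j = w ! k) \<or>
         (j = k \<and> w ! i = w ! l) \<or> (j = l \<and> w ! i = w ! k)"
proof -
  note common = adjacent_swaps_at_common_position[OF _ _ _ _ _ _ assms(7,8)]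
  have ij: "swap w i j = swap w j i" and kl: "swap w k l = swap w l k"
    using assms(1-4) by (auto intro: swap_commute)
  from adjacent_swaps_overlap[OF assms(1-9)]
  consider "i = k" | "i = l" | "j = k" | "j = l" by blast
  then show ?thesis
  proof cases
    case 1
    with assms(10) have "j \<noteq> l" by auto
    with 1 show ?thesis using common[of i j l] assms(1-9) by auto
  next
    case 2
    with assms(10) kl have "j \<noteq> k" by auto
    with 2 show ?thesis using common[of i j k] assms(1-9) kl by auto
  next
    case 3
    with assms(10) ij have "i \<noteq> l" by auto
    with 3 show ?thesis using common[of j i l] assms(1-9) ij by auto
  next
    case 4
    with assms(10) ij kl have "i \<noteq> k" by auto
    with 4 show ?thesis using common[of j i k] assms(1-9) ij kl by auto
  qed
qed

lemma adjacent_swaps_common_centre: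
  assumes "i < length w" "j < length w" "k < length w" "l < length w"
    and "w ! i \<noteq> w ! j" "w ! k \<noteq> w ! l"
    and "p < length w" "q < length w" "swap (swap w i j) p q = swap w k l"
    and "swap w i j \<noteq> swap w k l"
  obtains a c m where "a < length w" "c < length w" "m < length w" "a \<noteq> c"
    "w ! a = w ! c" "w ! m \<noteq> w ! a" "swap w i j = swap w a m" "swap w k l = swap w c m"
proof -
  have "swap w i j = swap w j i" "swap w k l = swap w l k"
    using assms(1-4) by (auto intro: swap_commute)
  with adjacent_swaps_cases[OF assms] assms that show ?thesis
    by (elim disjE conjE) (metis, metis, metis, metis)
qed

lemma common_neighbour_in_swap_star:
  assumes centre: "a < length w" "c < length w" "m < length w" "a \<noteq> c"
      "w ! a = w ! c" "w ! m \<noteq> w ! a"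
    and u: "e < length w" "f < length w" "w ! e \<noteq> w ! f"
      "swap w e f \<noteq> swap w a m" "swap w e f \<noteq> swap w c m"
    and adj_a: "p < length w" "q < length w" "swap (swap w a m) p q = swap w e f"
    and adj_c: "p' < length w" "q' < length w" "swap (swap w c m) p' q' = swap w e f"
  shows "swap w e f \<in> swap_star w (w ! a) m"
proof -
  have "(a = e \<and> w ! m = w ! f) \<or> (a = f \<and> w ! m = w ! e) \<or>
        (m = e \<and> w ! a = w ! f) \<or> (m = f \<and> w ! a = w ! e)"
    using adjacent_swaps_cases[of a w m e f p q] centre u adj_a by metis
  moreover have "(c = e \<and> w ! m = w ! f) \<or> (c = f \<and> w ! m = w ! e) \<or>
        (m = e \<and> w ! c = w ! f) \<or> (m = f \<and> w ! c = w ! e)"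
    using adjacent_swaps_cases[of c w m e f p' q'] centre u adj_c by metis
  moreover have "swap w a m = swap w m a" using centre by (auto intro: swap_commute)
  ultimately consider "m = e" "w ! f = w ! a" | "m = f" "w ! e = w ! a"
    using centre u by auto
  then show ?thesis
  proof cases
    case 1
    then have "swap w e f = swap w f m" using u by (auto intro: swap_commute)
    with 1 show ?thesis using u by (auto simp: swap_star_def Pos_def)
  next
    case 2
    then show ?thesis using u by (auto simp: swap_star_def Pos_def)
  qed
qed

lemma clique_subset_swap_star:
  assumes "2 \<le> \<sigma>" "w \<in> words \<sigma> P" "w \<noteq> []" "is_clique \<sigma> P C" "w \<in> C"
  shows "\<exists>x\<in>alphabet \<sigma>. \<exists>j < length w. w ! j \<noteq> x \<and> C \<subseteq> swap_star w x j"
proof -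
  have alphabet: "w ! i \<in> alphabet \<sigma>" if "i < length w" for i
    using assms(2) that unfolding words_def by auto
  have neighbour: "\<exists>i j. i < length w \<and> j < length w \<and> w ! i \<noteq> w ! j \<and> u = swap w i j"
    if "u \<in> C" "u \<noteq> w" for u
    by (rule clique_edge[OF assms(4,5) that(1)]) (use that(2) in auto)
  have adjacent: "\<exists>p q. p < length w \<and> q < length w \<and> swap u p q = v"
    if "u \<in> C" "v \<in> C" "u \<noteq> v" "length u = length w" for u v
    by (rule clique_edge[OF assms(4) that(1-3)]) (use that(4) in auto)
  consider "C \<subseteq> {w}" | u0 where "u0 \<in> C" "u0 \<noteq> w" "C \<subseteq> {w, u0}"
    | u0 u1 where "u0 \<in> C" "u1 \<in> C" "u0 \<noteq> w" "u1 \<noteq> w" "u0 \<noteq> u1"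
    by blast
  then show ?thesis
  proof cases
    case 1
    obtain x where "x \<in> alphabet \<sigma>" "x \<noteq> w ! 0"
      using assms(1) by (cases "w ! 0 = 1") (auto simp: alphabet_def intro: that[of 1] that[of 2])
    then show ?thesis
      using 1 assms(3) by (intro bexI[of _ x] exI[of _ 0]) (auto simp: swap_star_def)
  next
    case 2
    then obtain a b where "a < length w" "b < length w" "w ! a \<noteq> w ! b" "u0 = swap w a b"
      using neighbour by blast
    then show ?thesis
      using 2 alphabet by (intro bexI[of _ "w ! a"] exI[of _ b]) (auto simp: swap_star_def Pos_def)
  next
    case 3
    obtain i j where ij: "i < length w" "j < length w" "w ! i \<noteq> w ! j" "u0 = swap w i j"
      using neighbour 3(1,3) by blast
    obtain k l where kl: "k < length w" "l < length w" "w ! k \<noteq> w ! l" "u1 = swap w k l"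
      using neighbour 3(2,4) by blast
    obtain p q where "p < length w" "q < length w" "swap u0 p q = u1"
      using adjacent[OF 3(1,2,5)] ij(4) by auto
    then obtain a c m where centre: "a < length w" "c < length w" "m < length w" "a \<noteq> c"
        "w ! a = w ! c" "w ! m \<noteq> w ! a" "u0 = swap w a m" "u1 = swap w c m"
      using adjacent_swaps_common_centre[OF ij(1,2) kl(1,2) ij(3) kl(3)] ij(4) kl(4) 3(5) by metis
    have "u \<in> swap_star w (w ! a) m" if "u \<in> C" for u
    proof (cases "u \<in> {w, u0, u1}")
      case True
      then show ?thesis using centre by (auto simp: swap_star_def Pos_def)
    next
      case False
      then obtain e f where ef: "e < length w" "f < length w" "w ! e \<noteq> w ! f" "u = swap w e f"
        using neighbour \<open>u \<in> C\<close> by blast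
      obtain p q where "p < length w" "q < length w" "swap u0 p q = u"
        using adjacent[OF 3(1) \<open>u \<in> C\<close>] False ij(4) by auto
      moreover obtain p' q' where "p' < length w" "q' < length w" "swap u1 p' q' = u"
        using adjacent[OF 3(2) \<open>u \<in> C\<close>] False kl(4) by auto
      ultimately show ?thesis
        using common_neighbour_in_swap_star[OF centre(1-6) ef(1-3)] False centre(7,8) ef(4)
        by simp
    qed
    then show ?thesis using centre alphabet by blast
  qed
qed

theorem corollary1:
  fixes \<sigma> :: nat and P :: "nat \<Rightarrow> nat" and w :: "nat list" and C :: "nat list set"
  assumes "2 \<le> \<sigma>" and "0 < word_len \<sigma> P"
    and "w \<in> words \<sigma> P"
    and "is_maximal_clique \<sigma> P C" and "w \<in> C"
  shows "\<exists>x\<in>alphabet \<sigma>. \<exists>j < word_len \<sigma> P. w ! j \<noteq> x \<and>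
           C = {w} \<union> {swap w i j | i. i \<in> Pos w x}"
proof -
  have length_w: "length w = word_len \<sigma> P"
    using assms(3) by (rule length_word)
  have "w \<noteq> []"
    using assms(2) length_w by auto
  have clique: "is_clique \<sigma> P C" and maximal: "\<And>C'. is_clique \<sigma> P C' \<Longrightarrow> \<not> C \<subset> C'"
    using assms(4) unfolding is_maximal_clique_def by auto
  obtain x j where x: "x \<in> alphabet \<sigma>" and j: "j < length w" "w ! j \<noteq> x"
    and subset: "C \<subseteq> swap_star w x j"
    using clique_subset_swap_star[OF assms(1,3) \<open>w \<noteq> []\<close> clique assms(5)] by blast
  have "C = swap_star w x j"
    using maximal[OF swap_star_is_clique[OF assms(3) j]] subset by blast
  then show ?thesis
    using x j length_w unfolding swap_star_def by auto
qed

end
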